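(* Let $N\ge2$, $\tau$ in the upper half plane, $L=2\pi i(\mathbb{Z}\tau+\mathbb{Z})$, $q=e^{2\pi i\tau}$, $\Phi(\tau,x)=(1-e^{-x})\prod_{m\ge1}(1-q^me^{-x})(1-q^me^x)/(1-q^m)^2$ and $f(x)=\Phi(\tau,x)\Phi(\tau,-\tfrac{2\pi i}{N})/\Phi(\tau,x-\tfrac{2\pi i}{N})$. Let $q'\ge1$ with $q'\equiv1\pmod N$, and let $x_1,\dots,x_{q'}\in\mathbb{C}\setminus L$ be pairwise inequivalent modulo $L$. Then $$\sum_{i=1}^{q'}\frac1{f(x_i)}\prod_{j\ne i}\frac1{f(x_j-x_i)}-\prod_{i=1}^{q'}\frac1{f(x_i)}=0.$$
   Context: The function $f$ is the one defining the elliptic genus of level $N$ (lattice $L$, $N$-division point $2\pi i/N$); it satisfies $f(x+2\pi i)=f(x)$, $f(x+2\pi i\tau)=e^{-2\pi i/N}f(x)$, and $1/f$ has simple poles exactly at $L$ with residue $1$ at $0$. *)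

theory Defs
  imports "HOL-Analysis.Analysis"
begin

definition qnome :: "complex \<Rightarrow> complex" where
  "qnome tau = exp (2 * pi * \<i> * tau)"

definition lattice :: "complex \<Rightarrow> complex set" where
  "lattice tau = {2 * pi * \<i> * (of_int m * tau + of_int n) | m n :: int. True}"

definition Phi :: "complex \<Rightarrow> complex \<Rightarrow> complex" where
  "Phi tau x = (1 - exp (- x)) *
     (\<Prod>m. (1 - qnome tau ^ Suc m * exp (- x)) * (1 - qnome tau ^ Suc m * exp x)
            / (1 - qnome tau ^ Suc m)^2)"

definition ellf :: "nat \<Rightarrow> complex \<Rightarrow> complex \<Rightarrow> complex" where
  "ellf N tau x = Phi tau x * Phi tau (- 2 * pi * \<i> / of_nat N) / Phi tau (x - 2 * pi * \<i> / of_nat N)"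

end

theory Submission
  imports Defs "HOL-Complex_Analysis.Complex_Analysis"
begin

text \<open>
  Write \<open>g = 1 / f\<close> and \<open>\<zeta> = exp (2 pi i / N)\<close>. Then \<open>g\<close> is analytic off the lattice \<open>L\<close>,
  \<open>u g(u) \<rightarrow> 1\<close> at \<open>0\<close>, \<open>g(w + 2 pi i) = g(w)\<close> and \<open>g(w + 2 pi i tau) = \<zeta> g(w)\<close>.
  Let \<open>c\<^sub>i\<close> be the product of the \<open>g(x\<^sub>j - x\<^sub>i)\<close> over \<open>j \<noteq> i\<close> and
  \<open>D(z) = \<Prod>\<^sub>i g(x\<^sub>i - z) - \<Sum>\<^sub>i c\<^sub>i g(x\<^sub>i - z)\<close>.
  Because \<open>q' \<equiv> 1 (mod N)\<close>, \<open>D\<close> is \<open>2 pi i\<close>-periodic and \<open>D(z + 2 pi i tau) = \<zeta>\<^sup>-\<^sup>1 D(z)\<close>.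
  At \<open>z = x\<^sub>i\<close> the poles of the two terms cancel, so by quasi-periodicity all singularities
  of \<open>D\<close> are removable. The extension is entire with lattice-invariant modulus, hence bounded
  and constant by Liouville; since \<open>\<zeta> \<noteq> 1\<close> the constant is \<open>0\<close>, and \<open>z = 0\<close> gives the identity.

  The properties of \<open>g\<close> come from the product: \<open>Phi\<close> is entire with zeros exactly at \<open>L\<close>, and
  \<open>Phi(x + 2 pi i tau) = -e\<^sup>-\<^sup>x Phi(x) / q\<close> follows from a telescoping identity for the partial products.
\<close>

lemma quasi_periodic_of_int:
  fixes F :: "'a :: ring_1 \<Rightarrow> 'b :: field"
  assumes shift: "\<And>w. F (w + T) = c * F w" and "c \<noteq> 0"
  shows "F (w + of_int k * T) = c powi k * F w"
proof -
  have nat_shift: "F (w + of_nat j * T) = c ^ j * F w" for j w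
  proof (induction j arbitrary: w)
    case (Suc j)
    have "F (w + of_nat (Suc j) * T) = c * F (w + of_nat j * T)"
      using shift[of "w + of_nat j * T"] by (simp add: algebra_simps)
    with Suc show ?case by simp
  qed simp
  show ?thesis
  proof (cases "k \<ge> 0")
    case True
    then show ?thesis
      using nat_shift[of w "nat k"] by (simp add: power_int_def)
  next
    case False
    then have "F w = c ^ nat (- k) * F (w + of_int k * T)"
      using nat_shift[of "w + of_int k * T" "nat (- k)"] by simp
    with \<open>c \<noteq> 0\<close> False show ?thesis
      by (simp add: power_int_def field_simps)
  qed
qed

lemma lattice_quasi_periodic:
  fixes F :: "complex \<Rightarrow> 'b :: field"
  assumes "\<And>w. F (w + 2 * pi * \<i>) = F w" and "\<And>w. F (w + 2 * pi * \<i> * tau) = c * F w" and "c \<noteq> 0"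
  shows "F (w + 2 * pi * \<i> * (of_int m * tau + of_int n)) = c powi m * F w"
proof -
  have "F (w + 2 * pi * \<i> * (of_int m * tau + of_int n))
        = F ((w + of_int n * (2 * pi * \<i>)) + of_int m * (2 * pi * \<i> * tau))"
    by (simp add: algebra_simps)
  also have "\<dots> = c powi m * F (w + of_int n * (2 * pi * \<i>))"
    using assms(2,3) by (rule quasi_periodic_of_int)
  also have "F (w + of_int n * (2 * pi * \<i>)) = F w"
    using quasi_periodic_of_int[of F "2 * pi * \<i>" 1] assms(1) by simp
  finally show ?thesis .
qed

lemma power_eq_self_if_mod_eq_1:
  fixes \<zeta> :: "'a :: monoid_mult"
  assumes "\<zeta> ^ N = 1" and "n mod N = 1 mod N"
  shows "\<zeta> ^ n = \<zeta>"
proof -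
  have "\<zeta> ^ n = \<zeta> ^ (N * (n div N) + n mod N)"
    by simp
  also have "\<dots> = (\<zeta> ^ N) ^ (n div N) * \<zeta> ^ (1 mod N)"
    unfolding power_add power_mult assms(2) ..
  also have "\<dots> = \<zeta>"
    using assms(1) by (cases "N = 1") auto
  finally show ?thesis .
qed

lemma filterlim_at_reflect: "filterlim (\<lambda>z. a - z) (at (a - p)) (at (p :: 'a :: real_normed_vector))"
  by (rule filterlim_atI) (auto intro!: tendsto_eq_intros simp: eventually_at_filter)

lemma tendsto_simple_pole_times_diff:
  fixes h R :: "complex \<Rightarrow> complex"
  assumes h: "((\<lambda>u. u * h u) \<longlongrightarrow> c) (at 0)"
    and R: "(R has_field_derivative R') (at a)"
  shows "((\<lambda>z. h (a - z) * (R z - R a)) \<longlongrightarrow> - c * R') (at a)"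
proof -
  have "((\<lambda>z. (a - z) * h (a - z)) \<longlongrightarrow> c) (at a)"
    using filterlim_compose[OF h] filterlim_at_reflect[of a a] by simp
  moreover have "((\<lambda>z. (R z - R a) / (z - a)) \<longlongrightarrow> R') (at a)"
    using R by (simp add: has_field_derivative_iff)
  ultimately have "((\<lambda>z. (a - z) * h (a - z) * - ((R z - R a) / (z - a))) \<longlongrightarrow> c * - R') (at a)"
    by (intro tendsto_mult tendsto_minus)
  moreover have "\<forall>\<^sub>F z in at a. (a - z) * h (a - z) * - ((R z - R a) / (z - a)) = h (a - z) * (R z - R a)"
    by (auto simp: eventually_at_filter field_simps)
  ultimately show ?thesis
    by (auto elim: Lim_transform_eventually)
qed

lemma remove_sings_cmult:
  assumes "c \<noteq> 0"
  shows "remove_sings (\<lambda>w. c * f w) z = c * remove_sings f z"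
proof (cases "\<exists>L. f \<midarrow>z\<rightarrow> L")
  case True
  then obtain L where "f \<midarrow>z\<rightarrow> L" by blast
  then show ?thesis
    by (simp add: remove_sings_eqI tendsto_mult_left)
next
  case False
  have "\<not> (\<lambda>w. c * f w) \<midarrow>z\<rightarrow> L" for L
  proof
    assume "(\<lambda>w. c * f w) \<midarrow>z\<rightarrow> L"
    then have "(\<lambda>w. inverse c * (c * f w)) \<midarrow>z\<rightarrow> inverse c * L"
      by (rule tendsto_mult_left)
    with assms have "f \<midarrow>z\<rightarrow> inverse c * L"
      by (simp add: mult.assoc[symmetric])
    with False show False by blast
  qed
  with False show ?thesis
    by (simp add: remove_sings_def)
qed

lemma remove_sings_quasi_periodic:
  assumes "\<And>w. f (w + l) = c * f w" and "c \<noteq> 0"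
  shows "remove_sings f (z + l) = c * remove_sings f z"
proof -
  have "remove_sings f (z + l) = remove_sings (\<lambda>w. f (w + l)) z"
    by (subst (1 2) remove_sings_shift_0) (simp add: add_ac)
  also have "\<dots> = c * remove_sings f z"
    using assms by (simp add: remove_sings_cmult)
  finally show ?thesis .
qed

lemma holomorphic_prodinf_Weierstrass:
  fixes f :: "nat \<Rightarrow> complex \<Rightarrow> complex"
  assumes holo: "\<And>n. f n holomorphic_on UNIV"
    and dominated: "\<And>R. \<exists>M. summable M \<and> (\<forall>n z. norm z \<le> R \<longrightarrow> norm (f n z - 1) \<le> M n)"
  shows "(\<lambda>z. \<Prod>n. f n z) holomorphic_on UNIV"
proof (rule holomorphic_uniform_sequence)
  show "(\<lambda>z. \<Prod>m<n. f m z) holomorphic_on UNIV" for n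
    by (intro holomorphic_on_prod holo)
next
  fix z :: complex
  define R where "R = norm z + 1"
  obtain M where "summable M" and M: "\<And>n w. norm w \<le> R \<Longrightarrow> norm (f n w - 1) \<le> M n"
    using dominated[of R] by blast
  have "uniformly_convergent_on (cball 0 R) (\<lambda>n w. \<Prod>m<n. f m w)"
  proof (rule uniformly_convergent_on_prod')
    show "continuous_on (cball 0 R) (f n)" for n
      by (rule holomorphic_on_imp_continuous_on[OF holomorphic_on_subset[OF holo]]) simp
    show "uniformly_convergent_on (cball 0 R) (\<lambda>N w. \<Sum>n<N. norm (f n w - 1))"
      by (rule Weierstrass_m_test'[OF _ \<open>summable M\<close>]) (use M in simp)
  qed simp
  then obtain G where G: "uniform_limit (cball 0 R) (\<lambda>n w. \<Prod>m<n. f m w) G sequentially"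
    by (auto simp: uniformly_convergent_on_def)
  also have "?this \<longleftrightarrow> uniform_limit (cball 0 R) (\<lambda>n w. \<Prod>m<n. f m w) (\<lambda>w. \<Prod>n. f n w) sequentially"
  proof (intro uniform_limit_cong')
    fix w :: complex assume w: "w \<in> cball 0 R"
    have "summable (\<lambda>n. norm (f n w - 1))"
      by (rule summable_comparison_test'[OF \<open>summable M\<close>]) (use w M in simp)
    then have "(\<lambda>n. \<Prod>m<n. f m w) \<longlonglongrightarrow> (\<Prod>n. f n w)"
      by (intro has_prod_imp_tendsto' convergent_prod_has_prod abs_convergent_prod_imp_convergent_prod
          summable_imp_abs_convergent_prod)
    moreover have "(\<lambda>n. \<Prod>m<n. f m w) \<longlonglongrightarrow> G w"
      using G w by (rule tendsto_uniform_limitI)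
    ultimately show "G w = (\<Prod>n. f n w)"
      using LIMSEQ_unique by blast
  qed auto
  finally have "uniform_limit (cball z 1) (\<lambda>n w. \<Prod>m<n. f m w) (\<lambda>w. \<Prod>n. f n w) sequentially"
    by (rule uniform_limit_on_subset) (simp add: R_def cball_subset_cball_iff)
  then show "\<exists>d>0. cball z d \<subseteq> UNIV \<and> uniform_limit (cball z d) (\<lambda>n w. \<Prod>m<n. f m w) (\<lambda>w. \<Prod>n. f n w) sequentially"
    by (intro exI[of _ 1]) auto
qed simp

lemma ex_int_iff: "(\<exists>k::int. P k) \<longleftrightarrow> P 0 \<or> (\<exists>m::nat. P (of_nat (Suc m)) \<or> P (- of_nat (Suc m)))"
proof
  assume "\<exists>k. P k"
  then obtain k where "P k" ..
  then show "P 0 \<or> (\<exists>m::nat. P (of_nat (Suc m)) \<or> P (- of_nat (Suc m)))"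
    by (cases k rule: int_cases3) (auto intro!: exI[of _ "nat \<bar>k\<bar> - 1"])
qed blast

section \<open>The period lattice\<close>

lemma mem_lattice:
  "w \<in> lattice tau \<longleftrightarrow> (\<exists>m n :: int. w = 2 * pi * \<i> * (of_int m * tau + of_int n))"
  unfolding lattice_def by blast

lemma lattice_diff:
  assumes "a \<in> lattice tau" "b \<in> lattice tau"
  shows "a - b \<in> lattice tau"
proof -
  from assms obtain m n m' n' :: int where
    "a = 2 * pi * \<i> * (of_int m * tau + of_int n)" "b = 2 * pi * \<i> * (of_int m' * tau + of_int n')"
    unfolding mem_lattice by blast
  then show ?thesis
    unfolding mem_lattice by (intro exI[of _ "m - m'"] exI[of _ "n - n'"]) (simp add: algebra_simps)
qed

lemma zero_in_lattice: "0 \<in> lattice tau"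
  unfolding mem_lattice by (intro exI[of _ 0]) simp

lemma tau_in_lattice: "2 * pi * \<i> * tau \<in> lattice tau"
  unfolding mem_lattice by (intro exI[of _ 1] exI[of _ 0]) simp

lemma exp_eq_1_iff_int: "exp z = 1 \<longleftrightarrow> (\<exists>n::int. z = 2 * pi * \<i> * of_int n)"
proof
  assume "exp z = 1"
  then obtain n :: int where "z = 0 + of_int (2 * n) * pi * \<i>"
    using exp_eq[of z 0] by auto
  then show "\<exists>n::int. z = 2 * pi * \<i> * of_int n"
    by (intro exI[of _ n]) simp
qed (auto simp: exp_eq_1)

lemma lattice_iff_exp:
  "w \<in> lattice tau \<longleftrightarrow> (\<exists>m::int. exp (w - of_int m * (2 * pi * \<i> * tau)) = 1)"
  unfolding mem_lattice exp_eq_1_iff_int by (auto simp: algebra_simps)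

lemma lattice_norm_small_imp_zero:
  assumes "Im tau \<noteq> 0" "l \<in> lattice tau" "norm l < 2 * pi * min 1 \<bar>Im tau\<bar>"
  shows "l = 0"
proof -
  obtain m n :: int where l: "l = 2 * pi * \<i> * (of_int m * tau + of_int n)"
    using assms(2) unfolding mem_lattice by blast
  have small: "2 * pi * min 1 \<bar>Im tau\<bar> \<le> 2 * pi * \<bar>Im tau\<bar>" "2 * pi * min 1 \<bar>Im tau\<bar> \<le> 2 * pi"
    by simp_all
  have "2 * pi * (\<bar>of_int m\<bar> * \<bar>Im tau\<bar>) = \<bar>Re l\<bar>"
    by (simp add: l abs_mult)
  also have "\<dots> < 2 * pi * \<bar>Im tau\<bar>"
    using abs_Re_le_cmod[of l] assms(3) small by linarith
  finally have "m = 0"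
    using assms(1) by simp
  have "2 * pi * \<bar>of_int n\<bar> = norm l"
    by (simp add: l \<open>m = 0\<close> norm_mult)
  also have "\<dots> < 2 * pi"
    using assms(3) small by linarith
  finally have "n = 0" by simp
  with \<open>m = 0\<close> show ?thesis by (simp add: l)
qed

lemma eventually_not_in_lattice:
  assumes "Im tau \<noteq> 0"
  shows "eventually (\<lambda>u. u \<notin> lattice tau) (at p)"
proof -
  have "\<not> p islimpt lattice tau"
  proof (rule discrete_imp_not_islimpt)
    fix a b assume "a \<in> lattice tau" "b \<in> lattice tau" "dist b a < 2 * pi * min 1 \<bar>Im tau\<bar>"
    then show "b = a"
      using lattice_norm_small_imp_zero[OF assms lattice_diff, of b a] by (simp add: dist_norm)
  qed (use assms in auto)
  then show ?thesis
    by (simp add: islimpt_iff_eventually)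
qed

lemma lattice_fundamental_domain:
  assumes "Im tau \<noteq> 0"
  obtains s t :: real where "s \<in> {0..1}" "t \<in> {0..1}"
    "z - 2 * pi * \<i> * (of_real s * tau + of_real t) \<in> lattice tau"
proof -
  define w where "w = z / (2 * pi * \<i>)"
  define s where "s = Im w / Im tau"
  define t where "t = Re w - s * Re tau"
  have w: "w = of_real s * tau + of_real t"
    using assms by (intro complex_eqI) (simp_all add: s_def t_def)
  have z: "z = 2 * pi * \<i> * w"
    by (simp add: w_def)
  have frac: "x - of_int \<lfloor>x\<rfloor> \<in> {0..1}" for x :: real
    unfolding atLeastAtMost_iff using of_int_floor_le[of x] real_of_int_floor_add_one_gt[of x] by linarith
  have "z - 2 * pi * \<i> * (of_real (s - of_int \<lfloor>s\<rfloor>) * tau + of_real (t - of_int \<lfloor>t\<rfloor>))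
        = 2 * pi * \<i> * (of_int \<lfloor>s\<rfloor> * tau + of_int \<lfloor>t\<rfloor>)"
    by (simp add: z w algebra_simps)
  then show ?thesis
    using that[OF frac frac] unfolding mem_lattice by metis
qed

lemma bounded_range_if_lattice_invariant_norm:
  fixes F :: "complex \<Rightarrow> complex"
  assumes "Im tau \<noteq> 0" and "continuous_on UNIV F"
    and invariant: "\<And>z l. l \<in> lattice tau \<Longrightarrow> norm (F (z + l)) = norm (F z)"
  shows "bounded (range F)"
proof -
  define K where "K = (\<lambda>p. 2 * pi * \<i> * (of_real (fst p) * tau + of_real (snd p))) ` ({0..1::real} \<times> {0..1::real})"
  have "compact K"
    unfolding K_def by (intro compact_continuous_image compact_Times) (auto intro!: continuous_intros)
  then have "compact (F ` K)"
    using assms(2) by (auto intro: compact_continuous_image continuous_on_subset)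
  then obtain B where B: "\<And>k. k \<in> K \<Longrightarrow> norm (F k) \<le> B"
    by (meson bounded_iff compact_imp_bounded image_eqI)
  have "norm (F z) \<le> B" for z
  proof -
    obtain s t where st: "s \<in> {0..1}" "t \<in> {0..1}"
      and l: "z - 2 * pi * \<i> * (of_real s * tau + of_real t) \<in> lattice tau"
      using lattice_fundamental_domain[OF assms(1)] by blast
    have "norm (F z) = norm (F (2 * pi * \<i> * (of_real s * tau + of_real t)))"
      using invariant[OF l, of "2 * pi * \<i> * (of_real s * tau + of_real t)"] by simp
    also have "\<dots> \<le> B"
      using st by (intro B) (force simp: K_def)
    finally show ?thesis .
  qed
  then show ?thesis
    by (auto simp: bounded_iff)
qed

section \<open>The product \<open>Phi\<close>\<close>

definition Phi_factor :: "complex \<Rightarrow> nat \<Rightarrow> complex \<Rightarrow> complex" where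
  "Phi_factor tau m x = (1 - qnome tau ^ Suc m * exp (- x)) * (1 - qnome tau ^ Suc m * exp x)
                        / (1 - qnome tau ^ Suc m)^2"

definition Phi_partial :: "complex \<Rightarrow> nat \<Rightarrow> complex \<Rightarrow> complex" where
  "Phi_partial tau n x = (1 - exp (- x)) * (\<Prod>m<n. Phi_factor tau m x)"

lemma Phi_eq_prodinf: "Phi tau x = (1 - exp (- x)) * (\<Prod>m. Phi_factor tau m x)"
  unfolding Phi_def Phi_factor_def ..

lemma qnome_power: "qnome tau ^ k = exp (of_nat k * (2 * pi * \<i> * tau))"
  by (simp add: qnome_def exp_of_nat_mult)

lemma qnome_nonzero: "qnome tau \<noteq> 0"
  by (simp add: qnome_def)

lemma Phi_shift_2pi: "Phi tau (x + 2 * pi * \<i>) = Phi tau x"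
proof -
  have "exp (x + 2 * pi * \<i>) = exp x" "exp (- (x + 2 * pi * \<i>)) = exp (- x)"
    by (simp_all add: exp_add exp_diff)
  then show ?thesis
    unfolding Phi_def by simp
qed

lemma Phi_partial_shift_tau:
  fixes tau x :: complex
  defines "q \<equiv> qnome tau"
  shows "Phi_partial tau n (x + 2 * pi * \<i> * tau) * (1 - q ^ n * exp (- x)) * (1 - q * exp x)
         = (1 - exp (- x) / q) * Phi_partial tau n x * (1 - q ^ Suc n * exp x)"
proof -
  have exp_minus_shift: "exp (- (x + 2 * pi * \<i> * tau)) = exp (- x) / q"
    by (simp add: q_def qnome_def exp_diff exp_minus field_simps)
  have exp_shift: "exp (x + 2 * pi * \<i> * tau) = q * exp x"
    by (simp add: q_def qnome_def exp_add)
  show ?thesis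
  proof (induction n)
    case 0
    show ?case
      unfolding Phi_partial_def exp_minus_shift by simp
  next
    case (Suc n)
    define C where "C = (1 - q ^ Suc n)^2"
    have factor_shift: "Phi_factor tau n (x + 2 * pi * \<i> * tau)
                        = (1 - q ^ n * exp (- x)) * (1 - q ^ Suc (Suc n) * exp x) / C"
      unfolding Phi_factor_def exp_minus_shift exp_shift C_def q_def[symmetric]
      using qnome_nonzero[of tau] by (simp add: q_def field_simps)
    have factor: "Phi_factor tau n x = (1 - q ^ Suc n * exp (- x)) * (1 - q ^ Suc n * exp x) / C"
      unfolding Phi_factor_def C_def q_def ..
    have partial_Suc: "Phi_partial tau (Suc n) y = Phi_partial tau n y * Phi_factor tau n y" for y
      unfolding Phi_partial_def by (simp add: mult.assoc)
    have "Phi_partial tau (Suc n) (x + 2 * pi * \<i> * tau) * (1 - q ^ Suc n * exp (- x)) * (1 - q * exp x)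
        = (Phi_partial tau n (x + 2 * pi * \<i> * tau) * (1 - q ^ n * exp (- x)) * (1 - q * exp x))
          * ((1 - q ^ Suc (Suc n) * exp x) * (1 - q ^ Suc n * exp (- x)) / C)"
      unfolding partial_Suc factor_shift by (simp add: field_simps)
    also have "\<dots> = (1 - exp (- x) / q) * Phi_partial tau n x * (1 - q ^ Suc n * exp x)
          * ((1 - q ^ Suc (Suc n) * exp x) * (1 - q ^ Suc n * exp (- x)) / C)"
      unfolding Suc ..
    also have "\<dots> = (1 - exp (- x) / q) * Phi_partial tau (Suc n) x * (1 - q ^ Suc (Suc n) * exp x)"
      unfolding partial_Suc factor by (simp add: field_simps)
    finally show ?case .
  qed
qed

context
  fixes tau :: complex
  assumes tau: "Im tau > 0"
begin

lemma norm_qnome_less_1: "norm (qnome tau) < 1"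
  using tau by (simp add: qnome_def norm_exp_eq_Re)

lemma qnome_power_Suc_ne_1: "qnome tau ^ Suc m \<noteq> 1"
proof
  assume "qnome tau ^ Suc m = 1"
  then have "norm (qnome tau) ^ Suc m = 1"
    by (metis norm_one norm_power)
  moreover have "norm (qnome tau) ^ Suc m < 1"
    using norm_qnome_less_1 qnome_nonzero[of tau] by (intro power_Suc_less_one) auto
  ultimately show False
    by simp
qed

lemma norm_Phi_factor_minus_1_le:
  assumes "norm x \<le> R"
  shows "norm (Phi_factor tau m x - 1)
         \<le> norm (qnome tau) ^ Suc m * (2 + 2 * exp R) / (1 - norm (qnome tau))^2"
proof -
  define r where "r = qnome tau ^ Suc m"
  have "1 - r \<noteq> 0"
    using qnome_power_Suc_ne_1 by (simp add: r_def)
  have "(1 - r * exp (- x)) * (1 - r * exp x) - (1 - r)^2 = r * (2 - exp x - exp (- x))"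
    by (simp add: algebra_simps power2_eq_square exp_minus_inverse)
  with \<open>1 - r \<noteq> 0\<close> have factor: "Phi_factor tau m x - 1 = r * (2 - exp x - exp (- x)) / (1 - r)^2"
    unfolding Phi_factor_def r_def[symmetric] by (simp add: field_simps)
  have norm_r: "norm r \<le> norm (qnome tau)"
    unfolding r_def norm_power using norm_qnome_less_1 by (simp add: mult_left_le power_le_one)
  then have denominator: "1 - norm (qnome tau) \<le> norm (1 - r)"
    using norm_triangle_ineq2[of 1 r] by simp
  have "norm (exp x) \<le> exp R" "norm (exp (- x)) \<le> exp R"
    using abs_Re_le_cmod[of x] assms by (simp_all add: norm_exp_eq_Re)
  moreover have "norm (2 - exp x - exp (- x)) \<le> 2 + norm (exp x) + norm (exp (- x))"
    using norm_triangle_ineq4[of "2 - exp x" "exp (- x)"] norm_triangle_ineq4[of 2 "exp x"] by simp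
  ultimately have numerator: "norm (2 - exp x - exp (- x)) \<le> 2 + 2 * exp R"
    by linarith
  have "norm (Phi_factor tau m x - 1) = norm r * norm (2 - exp x - exp (- x)) / norm (1 - r)^2"
    by (simp add: factor norm_mult norm_divide norm_power)
  also have "\<dots> \<le> norm r * (2 + 2 * exp R) / (1 - norm (qnome tau))^2"
    using norm_qnome_less_1
    by (intro frac_le mult_left_mono numerator power_mono denominator) auto
  finally show ?thesis
    by (simp add: r_def norm_power norm_mult)
qed

lemma Phi_factor_dominated:
  "\<exists>M. summable M \<and> (\<forall>m x. norm x \<le> R \<longrightarrow> norm (Phi_factor tau m x - 1) \<le> M m)"
proof (intro exI conjI allI impI)
  show "summable (\<lambda>m. norm (qnome tau) ^ Suc m * (2 + 2 * exp R) / (1 - norm (qnome tau))^2)"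
    using norm_qnome_less_1 by (intro summable_divide summable_mult2) (simp add: summable_geometric)
qed (rule norm_Phi_factor_minus_1_le)

lemma convergent_prod_Phi_factor: "convergent_prod (\<lambda>m. Phi_factor tau m x)"
proof -
  obtain M where "summable M" and M: "\<And>m. norm (Phi_factor tau m x - 1) \<le> M m"
    using Phi_factor_dominated[of "norm x"] by blast
  have "summable (\<lambda>m. norm (Phi_factor tau m x - 1))"
    by (rule summable_comparison_test'[OF \<open>summable M\<close>]) (use M in simp)
  then show ?thesis
    by (intro abs_convergent_prod_imp_convergent_prod summable_imp_abs_convergent_prod)
qed

lemma Phi_partial_tendsto: "(\<lambda>n. Phi_partial tau n x) \<longlonglongrightarrow> Phi tau x"
  unfolding Phi_partial_def Phi_eq_prodinf
  by (intro tendsto_mult tendsto_const has_prod_imp_tendsto' convergent_prod_has_prod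
      convergent_prod_Phi_factor)

lemma holomorphic_prodinf_Phi_factor: "(\<lambda>x. \<Prod>m. Phi_factor tau m x) holomorphic_on UNIV"
proof (rule holomorphic_prodinf_Weierstrass[OF _ Phi_factor_dominated])
  show "Phi_factor tau m holomorphic_on UNIV" for m
    unfolding Phi_factor_def using qnome_power_Suc_ne_1[of m] by (intro holomorphic_intros) simp
qed

lemma analytic_Phi: "Phi tau analytic_on A"
proof -
  have "(\<lambda>x. (1 - exp (- x)) * (\<Prod>m. Phi_factor tau m x)) holomorphic_on UNIV"
    by (intro holomorphic_intros holomorphic_prodinf_Phi_factor)
  then show ?thesis
    unfolding Phi_eq_prodinf[abs_def] by (simp add: analytic_on_open analytic_on_subset[of _ UNIV])
qed

lemma analytic_on_Phi [analytic_intros]: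
  "f analytic_on A \<Longrightarrow> (\<lambda>w. Phi tau (f w)) analytic_on A"
  using analytic_on_compose[of f A "Phi tau"] analytic_Phi by (simp add: o_def)

lemma Phi_has_field_derivative_0: "(Phi tau has_field_derivative 1) (at 0)"
proof -
  define P where "P = (\<lambda>x. \<Prod>m. Phi_factor tau m x)"
  obtain P' where P': "(P has_field_derivative P') (at 0)"
    using holomorphic_prodinf_Phi_factor unfolding P_def
    by (meson field_differentiable_def holomorphic_on_imp_differentiable_at open_UNIV UNIV_I)
  have "Phi_factor tau m 0 = 1" for m
    using qnome_power_Suc_ne_1[of m] by (simp add: Phi_factor_def power2_eq_square)
  then have "P 0 = 1"
    by (simp add: P_def)
  have "((\<lambda>x. 1 - exp (- x)) has_field_derivative exp (- 0)) (at 0)"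
    by (auto intro!: derivative_eq_intros)
  from DERIV_mult[OF this P']
  have "((\<lambda>x. (1 - exp (- x)) * P x) has_field_derivative (exp (- 0) * P 0 + P' * (1 - exp (- 0)))) (at 0)" .
  then show ?thesis
    using \<open>P 0 = 1\<close> by (simp add: Phi_eq_prodinf[abs_def] P_def)
qed

lemma Phi_factor_eq_0_iff:
  "Phi_factor tau m w = 0 \<longleftrightarrow>
     exp (w - of_nat (Suc m) * (2 * pi * \<i> * tau)) = 1 \<or> exp (w + of_nat (Suc m) * (2 * pi * \<i> * tau)) = 1"
proof -
  have "qnome tau ^ Suc m * exp (- w) = inverse (exp (w - of_nat (Suc m) * (2 * pi * \<i> * tau)))"
    unfolding qnome_power by (simp add: exp_diff exp_minus field_simps)
  moreover have "qnome tau ^ Suc m * exp w = exp (w + of_nat (Suc m) * (2 * pi * \<i> * tau))"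
    unfolding qnome_power by (simp add: exp_add mult.commute)
  ultimately show ?thesis
    using qnome_power_Suc_ne_1[of m] by (auto simp: Phi_factor_def)
qed

lemma Phi_eq_0_iff: "Phi tau w = 0 \<longleftrightarrow> w \<in> lattice tau"
proof -
  define T where "T = 2 * pi * \<i> * tau"
  have "Phi tau w = 0 \<longleftrightarrow> exp (- w) = 1 \<or> (\<exists>m. Phi_factor tau m w = 0)"
    unfolding Phi_eq_prodinf
    using has_prod_eq_0_iff[OF convergent_prod_has_prod[OF convergent_prod_Phi_factor, of w]] by auto
  also have "\<dots> \<longleftrightarrow> (\<exists>k::int. exp (w - of_int k * T) = 1)"
    by (subst ex_int_iff) (simp add: Phi_factor_eq_0_iff T_def exp_minus algebra_simps)
  also have "\<dots> \<longleftrightarrow> w \<in> lattice tau"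
    by (simp add: lattice_iff_exp T_def)
  finally show ?thesis .
qed

lemma Phi_shift_tau_multiplied:
  "Phi tau (x + 2 * pi * \<i> * tau) * (1 - qnome tau * exp x) = (1 - exp (- x) / qnome tau) * Phi tau x"
proof -
  define q where "q = qnome tau"
  have q_power: "(\<lambda>n. q ^ n) \<longlonglongrightarrow> 0"
    unfolding q_def using norm_qnome_less_1 by (rule LIMSEQ_power_zero)
  have partial_identity:
    "Phi_partial tau n (x + 2 * pi * \<i> * tau) * (1 - q ^ n * exp (- x)) * (1 - q * exp x)
     = (1 - exp (- x) / q) * Phi_partial tau n x * (1 - q ^ Suc n * exp x)" for n
    unfolding q_def by (rule Phi_partial_shift_tau)
  have "(\<lambda>n. Phi_partial tau n (x + 2 * pi * \<i> * tau) * (1 - q ^ n * exp (- x)) * (1 - q * exp x))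
        \<longlonglongrightarrow> Phi tau (x + 2 * pi * \<i> * tau) * (1 - 0 * exp (- x)) * (1 - q * exp x)"
    by (intro tendsto_intros Phi_partial_tendsto q_power)
  then have "(\<lambda>n. (1 - exp (- x) / q) * Phi_partial tau n x * (1 - q ^ Suc n * exp x))
        \<longlonglongrightarrow> Phi tau (x + 2 * pi * \<i> * tau) * (1 - 0 * exp (- x)) * (1 - q * exp x)"
    unfolding partial_identity .
  moreover have "(\<lambda>n. (1 - exp (- x) / q) * Phi_partial tau n x * (1 - q ^ Suc n * exp x))
        \<longlonglongrightarrow> (1 - exp (- x) / q) * Phi tau x * (1 - 0 * exp x)"
    by (intro tendsto_intros Phi_partial_tendsto LIMSEQ_Suc[OF q_power])
  ultimately show ?thesis
    unfolding q_def using LIMSEQ_unique by fastforce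
qed

lemma Phi_shift_tau: "Phi tau (x + 2 * pi * \<i> * tau) = - (exp (- x) / qnome tau) * Phi tau x"
proof (cases "1 - qnome tau * exp x = 0")
  case True
  then have "exp (x + 2 * pi * \<i> * tau - of_int 0 * (2 * pi * \<i> * tau)) = 1"
    by (simp add: qnome_def exp_add mult.commute)
  then have "x + 2 * pi * \<i> * tau \<in> lattice tau"
    unfolding lattice_iff_exp by blast
  moreover from lattice_diff[OF this tau_in_lattice] have "x \<in> lattice tau"
    by simp
  ultimately show ?thesis
    by (metis Phi_eq_0_iff mult_zero_right)
next
  case False
  have "1 - exp (- x) / qnome tau = - (exp (- x) / qnome tau) * (1 - qnome tau * exp x)"
    using qnome_nonzero[of tau] by (simp add: field_simps exp_minus)
  with Phi_shift_tau_multiplied[of x]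
  have "Phi tau (x + 2 * pi * \<i> * tau) * (1 - qnome tau * exp x)
        = (- (exp (- x) / qnome tau) * Phi tau x) * (1 - qnome tau * exp x)"
    by (simp only: mult_ac)
  then show ?thesis
    by (simp only: mult_right_cancel[OF False])
qed

end

section \<open>Twisted elliptic functions\<close>

locale twisted_elliptic =
  fixes tau :: complex and N :: nat and zeta :: complex and g :: "complex \<Rightarrow> complex"
  assumes Im_tau_nonzero: "Im tau \<noteq> 0"
    and N_pos: "N > 0" and zeta_root: "zeta ^ N = 1" and zeta_ne_1: "zeta \<noteq> 1"
    and analytic_off_lattice: "g analytic_on - lattice tau"
    and residue_1: "((\<lambda>u. u * g u) \<longlongrightarrow> 1) (at 0)"
    and shift_2pi: "\<And>w. g (w + 2 * pi * \<i>) = g w"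
    and shift_tau: "\<And>w. g (w + 2 * pi * \<i> * tau) = zeta * g w"
begin

lemma zeta_nonzero: "zeta \<noteq> 0"
  using zeta_root N_pos by (auto simp: power_0_left)

lemma norm_zeta: "norm zeta = 1"
proof -
  have "norm zeta ^ N = 1 ^ N"
    using zeta_root by (metis norm_one norm_power power_one)
  then show ?thesis
    by (rule power_eq_imp_eq_base) (simp_all add: N_pos)
qed

lemma shift_minus_tau: "g (w - 2 * pi * \<i> * tau) = inverse zeta * g w"
  using shift_tau[of "w - 2 * pi * \<i> * tau"] zeta_nonzero by simp

lemma analytic_on_reflect:
  assumes "a - z \<notin> lattice tau"
  shows "(\<lambda>z. g (a - z)) analytic_on {z}"
proof -
  have "(g \<circ> (\<lambda>z. a - z)) analytic_on {z}"
    using assms by (intro analytic_on_compose analytic_intros analytic_on_subset[OF analytic_off_lattice]) auto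
  then show ?thesis
    by (simp add: o_def)
qed

definition partial_fraction_coeff :: "nat \<Rightarrow> (nat \<Rightarrow> complex) \<Rightarrow> nat \<Rightarrow> complex" where
  "partial_fraction_coeff n x i = (\<Prod>j\<in>{..<n} - {i}. g (x j - x i))"

definition partial_fraction_defect :: "nat \<Rightarrow> (nat \<Rightarrow> complex) \<Rightarrow> complex \<Rightarrow> complex" where
  "partial_fraction_defect n x z =
     (\<Prod>i<n. g (x i - z)) - (\<Sum>i<n. partial_fraction_coeff n x i * g (x i - z))"

lemma partial_fraction_defect_analytic:
  assumes "\<And>i. i < n \<Longrightarrow> x i - z \<notin> lattice tau"
  shows "partial_fraction_defect n x analytic_on {z}"
  unfolding partial_fraction_defect_def[abs_def]
  using assms by (intro analytic_intros analytic_on_reflect) auto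

lemma eventually_translates_not_in_lattice:
  fixes x :: "nat \<Rightarrow> complex"
  shows "eventually (\<lambda>z. \<forall>i<n. x i - z \<notin> lattice tau) (at p)"
proof -
  have "eventually (\<lambda>z. x i - z \<notin> lattice tau) (at p)" for i
    using eventually_compose_filterlim[OF eventually_not_in_lattice[OF Im_tau_nonzero] filterlim_at_reflect]
    by simp
  then have "eventually (\<lambda>z. \<forall>i\<in>{..<n}. x i - z \<notin> lattice tau) (at p)"
    by (intro eventually_ball_finite) auto
  then show ?thesis
    by (rule eventually_mono) simp
qed

lemma isolated_singularity_partial_fraction_defect:
  "isolated_singularity_at (partial_fraction_defect n x) p"
proof -
  obtain r where "r > 0" and r: "\<And>z. z \<noteq> p \<Longrightarrow> dist z p < r \<Longrightarrow> \<forall>i<n. x i - z \<notin> lattice tau"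
    using eventually_translates_not_in_lattice[of n x p] unfolding eventually_at by blast
  have "partial_fraction_defect n x analytic_on ball p r - {p}"
    using r by (subst analytic_on_analytic_at) (auto intro!: partial_fraction_defect_analytic simp: dist_commute)
  with \<open>r > 0\<close> show ?thesis
    unfolding isolated_singularity_at_def by blast
qed

lemma partial_fraction_defect_shift_2pi:
  "partial_fraction_defect n x (z + 2 * pi * \<i>) = partial_fraction_defect n x z"
proof -
  have "g (x i - (z + 2 * pi * \<i>)) = g (x i - z)" for i
    using shift_2pi[of "x i - (z + 2 * pi * \<i>)"] by simp
  then show ?thesis
    by (simp add: partial_fraction_defect_def)
qed

context
  fixes n :: nat and x :: "nat \<Rightarrow> complex"
  assumes n_mod: "n mod N = 1 mod N"
    and inequiv: "\<And>i j. i < n \<Longrightarrow> j < n \<Longrightarrow> i \<noteq> j \<Longrightarrow> x i - x j \<notin> lattice tau"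
begin

lemma partial_fraction_defect_shift_tau:
  "partial_fraction_defect n x (z + 2 * pi * \<i> * tau) = inverse zeta * partial_fraction_defect n x z"
proof -
  have shift: "g (x i - (z + 2 * pi * \<i> * tau)) = inverse zeta * g (x i - z)" for i
    using shift_minus_tau[of "x i - z"] by (simp add: algebra_simps)
  have "inverse zeta ^ n = inverse zeta"
    using power_eq_self_if_mod_eq_1[OF zeta_root n_mod] by (simp add: power_inverse)
  then have "(\<Prod>i<n. g (x i - (z + 2 * pi * \<i> * tau))) = inverse zeta * (\<Prod>i<n. g (x i - z))"
    unfolding shift prod.distrib by simp
  moreover have "(\<Sum>i<n. partial_fraction_coeff n x i * g (x i - (z + 2 * pi * \<i> * tau)))
                 = inverse zeta * (\<Sum>i<n. partial_fraction_coeff n x i * g (x i - z))"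
    unfolding shift sum_distrib_left by (simp add: mult.left_commute)
  ultimately show ?thesis
    by (simp add: partial_fraction_defect_def right_diff_distrib)
qed

lemma partial_fraction_defect_shift_lattice:
  assumes "l \<in> lattice tau"
  obtains c where "norm c = 1"
    and "\<And>z. partial_fraction_defect n x (z + l) = c * partial_fraction_defect n x z"
proof -
  obtain m k :: int where l: "l = 2 * pi * \<i> * (of_int m * tau + of_int k)"
    using assms unfolding mem_lattice by blast
  have "partial_fraction_defect n x (z + l) = inverse zeta powi m * partial_fraction_defect n x z" for z
    unfolding l using zeta_nonzero
    by (intro lattice_quasi_periodic partial_fraction_defect_shift_2pi partial_fraction_defect_shift_tau) simp
  moreover have "norm (inverse zeta powi m) = 1"
    by (simp add: norm_power_int norm_inverse norm_zeta)
  ultimately show ?thesis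
    using that by blast
qed

lemma partial_fraction_defect_tendsto_at_node:
  assumes "i < n"
  shows "\<exists>L. (partial_fraction_defect n x \<longlongrightarrow> L) (at (x i))"
proof -
  define I where "I = {..<n} - {i}"
  define R where "R z = (\<Prod>j\<in>I. g (x j - z))" for z
  define S where "S z = (\<Sum>j\<in>I. partial_fraction_coeff n x j * g (x j - z))" for z
  have regular: "x j - x i \<notin> lattice tau" if "j \<in> I" for j
    using inequiv that \<open>i < n\<close> by (auto simp: I_def)
  have "R analytic_on {x i}"
    unfolding R_def[abs_def] by (intro analytic_intros analytic_on_reflect regular)
  then obtain R' where R': "(R has_field_derivative R') (at (x i))"
    using analytic_on_imp_differentiable_at field_differentiable_def by blast
  have "S analytic_on {x i}"
    unfolding S_def[abs_def] by (intro analytic_intros analytic_on_reflect regular)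
  then have "isCont S (x i)"
    by (rule analytic_at_imp_isCont)
  txt \<open>The pole of \<open>g (x i - z)\<close> is multiplied by \<open>R z - R (x i)\<close>, which vanishes at \<open>x i\<close>.\<close>
  have "partial_fraction_defect n x = (\<lambda>z. g (x i - z) * (R z - R (x i)) - S z)"
  proof
    fix z
    have "(\<Prod>j<n. g (x j - z)) = g (x i - z) * R z"
      unfolding R_def I_def using \<open>i < n\<close> by (subst prod.remove[of _ i]) auto
    moreover have "(\<Sum>j<n. partial_fraction_coeff n x j * g (x j - z))
                   = partial_fraction_coeff n x i * g (x i - z) + S z"
      unfolding S_def I_def using \<open>i < n\<close> by (subst sum.remove[of _ i]) auto
    moreover have "partial_fraction_coeff n x i = R (x i)"
      unfolding partial_fraction_coeff_def R_def I_def ..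
    ultimately show "partial_fraction_defect n x z = g (x i - z) * (R z - R (x i)) - S z"
      by (simp add: partial_fraction_defect_def algebra_simps)
  qed
  moreover have "((\<lambda>z. g (x i - z) * (R z - R (x i)) - S z) \<longlongrightarrow> - 1 * R' - S (x i)) (at (x i))"
    using \<open>isCont S (x i)\<close> by (intro tendsto_diff tendsto_simple_pole_times_diff[OF residue_1 R']) (simp add: isCont_def)
  ultimately show ?thesis
    by metis
qed

lemma remove_sings_partial_fraction_defect_shift:
  assumes "l \<in> lattice tau"
  obtains c where "norm c = 1"
    and "\<And>z. remove_sings (partial_fraction_defect n x) (z + l) = c * remove_sings (partial_fraction_defect n x) z"
proof -
  obtain c where "norm c = 1" and "\<And>z. partial_fraction_defect n x (z + l) = c * partial_fraction_defect n x z"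
    using partial_fraction_defect_shift_lattice[OF assms] by blast
  then show ?thesis
    using that remove_sings_quasi_periodic[of "partial_fraction_defect n x" l c] by fastforce
qed

lemma remove_sings_partial_fraction_defect_analytic:
  "remove_sings (partial_fraction_defect n x) analytic_on UNIV"
proof -
  let ?D = "remove_sings (partial_fraction_defect n x)"
  have "?D analytic_on {p}" for p
  proof (cases "\<forall>i<n. x i - p \<notin> lattice tau")
    case True
    then show ?thesis
      by (intro remove_sings_analytic_on partial_fraction_defect_analytic) auto
  next
    case False
    then obtain i where "i < n" and node: "x i - p \<in> lattice tau"
      by blast
    obtain c where "norm c = 1" and c: "\<And>z. ?D (z + (x i - p)) = c * ?D z"
      using remove_sings_partial_fraction_defect_shift[OF node] by blast
    have "\<exists>L. (partial_fraction_defect n x \<longlongrightarrow> L) (at (x i))"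
      using \<open>i < n\<close> by (rule partial_fraction_defect_tendsto_at_node)
    then obtain L where "(partial_fraction_defect n x \<longlongrightarrow> L) (at (x i))"
      by blast
    then have "?D analytic_on {x i}"
      by (intro remove_sings_analytic_at isolated_singularity_partial_fraction_defect)
    then have "(?D \<circ> (\<lambda>z. z + (x i - p))) analytic_on {p}"
      by (intro analytic_on_compose analytic_intros) simp
    then have "(\<lambda>z. inverse c * ?D (z + (x i - p))) analytic_on {p}"
      by (intro analytic_intros) (simp add: o_def)
    moreover have "c \<noteq> 0"
      using \<open>norm c = 1\<close> by auto
    then have "inverse c * ?D (z + (x i - p)) = ?D z" for z
      by (simp add: c)
    ultimately show ?thesis
      by simp
  qed
  then show ?thesis
    using analytic_on_analytic_at by blast
qed

lemma partial_fraction_defect_eq_0: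
  assumes regular: "\<And>i. i < n \<Longrightarrow> x i - z \<notin> lattice tau"
  shows "partial_fraction_defect n x z = 0"
proof -
  let ?D = "remove_sings (partial_fraction_defect n x)"
  have holo: "?D holomorphic_on UNIV"
    using remove_sings_partial_fraction_defect_analytic by (rule analytic_imp_holomorphic)
  have "bounded (range ?D)"
  proof (rule bounded_range_if_lattice_invariant_norm[OF Im_tau_nonzero])
    show "continuous_on UNIV ?D"
      using holo by (rule holomorphic_on_imp_continuous_on)
    fix z l assume "l \<in> lattice tau"
    then obtain c where "norm c = 1" and "?D (z + l) = c * ?D z"
      using remove_sings_partial_fraction_defect_shift by metis
    then show "norm (?D (z + l)) = norm (?D z)"
      by (simp add: norm_mult)
  qed
  then obtain c0 where c0: "\<And>z. ?D z = c0"
    using Liouville_theorem[OF holo] unfolding constant_on_def by blast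
  have "?D (0 + 2 * pi * \<i> * tau) = inverse zeta * ?D 0"
    using zeta_nonzero
    by (intro remove_sings_quasi_periodic partial_fraction_defect_shift_tau) simp
  then have "c0 = inverse zeta * c0"
    by (simp add: c0)
  moreover have "inverse zeta \<noteq> 1"
    using zeta_ne_1 by (auto simp: inverse_eq_1_iff)
  ultimately have "c0 = 0"
    by (metis mult_cancel_right1)
  moreover have "?D z = partial_fraction_defect n x z"
    using regular by (intro remove_sings_at_analytic partial_fraction_defect_analytic)
  ultimately show ?thesis
    by (simp add: c0)
qed

theorem prod_eq_partial_fractions:
  assumes "\<And>i. i < n \<Longrightarrow> x i - z \<notin> lattice tau"
  shows "(\<Prod>i<n. g (x i - z)) = (\<Sum>i<n. partial_fraction_coeff n x i * g (x i - z))"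
  using partial_fraction_defect_eq_0[OF assms] by (simp add: partial_fraction_defect_def)

end

end

section \<open>The elliptic function of level \<open>N\<close>\<close>

lemma inverse_ellf:
  "1 / ellf N tau w = Phi tau (w - 2 * pi * \<i> / of_nat N) / (Phi tau w * Phi tau (- 2 * pi * \<i> / of_nat N))"
  by (simp add: ellf_def)

context
  fixes N :: nat and tau :: complex
  assumes N: "N \<ge> 2" and tau: "Im tau > 0"
begin

lemma division_point_not_in_lattice: "- 2 * pi * \<i> / of_nat N \<notin> lattice tau"
proof
  assume "- 2 * pi * \<i> / of_nat N \<in> lattice tau"
  then obtain m n :: int where "- 2 * pi * \<i> / of_nat N = 2 * pi * \<i> * (of_int m * tau + of_int n)"
    unfolding mem_lattice by blast
  then have "2 * pi * \<i> * (of_int m * tau + of_int n) = 2 * pi * \<i> * of_real (- 1 / real N)"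
    by simp
  then have eq: "of_int m * tau + of_int n = of_real (- 1 / real N)"
    by (subst (asm) mult_left_cancel) simp_all
  have "of_int m * Im tau = Im (of_int m * tau + of_int n)"
    by simp
  also have "\<dots> = 0"
    unfolding eq by (rule Im_complex_of_real)
  finally have "m = 0"
    using tau by simp
  have "real_of_int n = Re (of_int m * tau + of_int n)"
    using \<open>m = 0\<close> by simp
  also have "\<dots> = - 1 / real N"
    unfolding eq by (rule Re_complex_of_real)
  finally have "real_of_int n * real N = - 1"
    using N by (simp add: field_simps)
  then have "n * int N = - 1"
    by (metis of_int_eq_iff of_int_minus of_int_1 of_int_mult of_int_of_nat_eq)
  then have "int N dvd 1"
    by (metis dvd_minus_iff dvd_triv_right)
  with N show False
    by simp
qed

lemma Phi_division_point_nonzero: "Phi tau (- 2 * pi * \<i> / of_nat N) \<noteq> 0"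
  using division_point_not_in_lattice Phi_eq_0_iff[OF tau] by blast

lemma exp_division_point_ne_1: "exp (2 * pi * \<i> / of_nat N) \<noteq> 1"
proof
  assume "exp (2 * pi * \<i> / of_nat N) = 1"
  then have "2 * pi * \<i> / of_nat N \<in> lattice tau"
    unfolding lattice_iff_exp by (intro exI[of _ 0]) simp
  from lattice_diff[OF zero_in_lattice this] show False
    using division_point_not_in_lattice by simp
qed

lemma analytic_inverse_ellf: "(\<lambda>w. 1 / ellf N tau w) analytic_on - lattice tau"
  unfolding inverse_ellf using tau Phi_division_point_nonzero
  by (intro analytic_intros) (auto simp: Phi_eq_0_iff[OF tau])

lemma inverse_ellf_residue_0: "((\<lambda>u. u * (1 / ellf N tau u)) \<longlongrightarrow> 1) (at 0)"
proof -
  have "((\<lambda>u. (Phi tau u - Phi tau 0) / (u - 0)) \<longlongrightarrow> 1) (at 0)"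
    using Phi_has_field_derivative_0[OF tau] by (simp only: has_field_derivative_iff)
  then have Phi_over_id: "((\<lambda>u. Phi tau u / u) \<longlongrightarrow> 1) (at 0)"
    by (simp add: Phi_def)
  have "isCont (\<lambda>u. Phi tau (u - 2 * pi * \<i> / of_nat N)) 0"
    using tau by (intro analytic_at_imp_isCont analytic_intros)
  then have "((\<lambda>u. Phi tau (u - 2 * pi * \<i> / of_nat N)) \<longlongrightarrow> Phi tau (- 2 * pi * \<i> / of_nat N)) (at 0)"
    by (simp add: isCont_def)
  then have "((\<lambda>u. Phi tau (u - 2 * pi * \<i> / of_nat N) / Phi tau (- 2 * pi * \<i> / of_nat N) / (Phi tau u / u))
             \<longlongrightarrow> Phi tau (- 2 * pi * \<i> / of_nat N) / Phi tau (- 2 * pi * \<i> / of_nat N) / 1) (at 0)"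
    using Phi_division_point_nonzero by (intro tendsto_divide Phi_over_id tendsto_const) simp_all
  then show ?thesis
    using Phi_division_point_nonzero
    by (simp add: inverse_ellf divide_divide_eq_right divide_divide_eq_left ac_simps)
qed

lemma inverse_ellf_shift_2pi: "1 / ellf N tau (w + 2 * pi * \<i>) = 1 / ellf N tau w"
proof -
  have "Phi tau (w + 2 * pi * \<i> - 2 * pi * \<i> / of_nat N) = Phi tau (w - 2 * pi * \<i> / of_nat N)"
    using Phi_shift_2pi[of tau "w - 2 * pi * \<i> / of_nat N"] by (simp add: algebra_simps)
  then show ?thesis
    by (simp only: inverse_ellf Phi_shift_2pi)
qed

lemma inverse_ellf_shift_tau:
  "1 / ellf N tau (w + 2 * pi * \<i> * tau) = exp (2 * pi * \<i> / of_nat N) * (1 / ellf N tau w)"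
proof -
  define a where "a = 2 * pi * \<i> / of_nat N"
  define b where "b = Phi tau (- 2 * pi * \<i> / of_nat N)"
  have inverse_ellf_ab: "1 / ellf N tau v = Phi tau (v - a) / (Phi tau v * b)" for v
    by (simp add: inverse_ellf a_def b_def)
  have "Phi tau (w + 2 * pi * \<i> * tau - a) = - (exp (- (w - a)) / qnome tau) * Phi tau (w - a)"
    using Phi_shift_tau[OF tau, of "w - a"] by (simp add: algebra_simps)
  also have "exp (- (w - a)) = exp (- w) * exp a"
    by (simp flip: exp_add)
  finally have shift_numerator:
    "Phi tau (w + 2 * pi * \<i> * tau - a) = - (exp (- w) / qnome tau) * exp a * Phi tau (w - a)"
    by simp
  have "b \<noteq> 0"
    unfolding b_def by (rule Phi_division_point_nonzero)
  then show ?thesis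
    unfolding inverse_ellf_ab shift_numerator Phi_shift_tau[OF tau, of w] a_def[symmetric]
    using qnome_nonzero[of tau] by (cases "Phi tau w = 0") (simp_all add: field_simps)
qed

lemma twisted_elliptic_inverse_ellf:
  "twisted_elliptic tau N (exp (2 * pi * \<i> / of_nat N)) (\<lambda>w. 1 / ellf N tau w)"
proof
  show "Im tau \<noteq> 0" "N > 0"
    using tau N by auto
  show "exp (2 * pi * \<i> / of_nat N) ^ N = 1"
    using N by (simp flip: exp_of_nat_mult)
qed (rule exp_division_point_ne_1 analytic_inverse_ellf inverse_ellf_residue_0
       inverse_ellf_shift_2pi inverse_ellf_shift_tau)+

end

theorem lemma3p2p3:
  fixes N q' :: nat and tau :: complex and x :: "nat \<Rightarrow> complex"
  assumes "N \<ge> 2" and "Im tau > 0"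
    and "q' \<ge> 1" and "q' mod N = 1 mod N"
    and "\<And>i. i < q' \<Longrightarrow> x i \<notin> lattice tau"
    and "\<And>i j. i < q' \<Longrightarrow> j < q' \<Longrightarrow> i \<noteq> j \<Longrightarrow> x i - x j \<notin> lattice tau"
  shows "(\<Sum>i<q'. (1 / ellf N tau (x i)) *
            (\<Prod>j\<in>{..<q'} - {i}. 1 / ellf N tau (x j - x i)))
         - (\<Prod>i<q'. 1 / ellf N tau (x i)) = 0"
proof -
  interpret twisted_elliptic tau N "exp (2 * pi * \<i> / of_nat N)" "\<lambda>w. 1 / ellf N tau w"
    using assms(1,2) by (rule twisted_elliptic_inverse_ellf)
  have "(\<Prod>i<q'. 1 / ellf N tau (x i - 0))
        = (\<Sum>i<q'. partial_fraction_coeff q' x i * (1 / ellf N tau (x i - 0)))"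
    using assms(4-6) by (intro prod_eq_partial_fractions) auto
  then show ?thesis
    by (simp add: partial_fraction_coeff_def mult.commute)
qed

end
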